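(* Let $\mathcal{F}$ and $\mathcal{G}$ be uniform sheaves over $\mathcal{B}$, let $\mathcal{F}'\subset\mathcal{F}$ be a dense subsheaf, and suppose $\mathcal{G}$ is complete. Then every uniformly continuous morphism $f:\mathcal{F}'\to\mathcal{G}$ extends uniquely to a uniformly continuous morphism $\tilde f:\mathcal{F}\to\mathcal{G}$.
   Context: $\mathcal{W}$ is a quasi-separated (fs log) adic space locally of finite type over a finite extension $K$ of $\mathbb{Q}_p$, and $\mathcal{B}$ is a basis of the big pro-Kummer-étale site $(Rig/\mathcal{W})_{proket}$ consisting of log affinoid perfectoid objects. A Hausdorff topological sheaf on $\mathcal{B}$ is a functor $\mathcal{B}^{op}\to$ (Hausdorff topological spaces) such that $\mathcal{F}(U\sqcup V)=\mathcal{F}(U)\times\mathcal{F}(V)$ and for every truncated finite hypercover $\{V^2_j\}\to\{V^1_i\}\to V$ in $\mathcal{B}$ the diagram $\mathcal{F}(V)\to\prod_i\mathcal{F}(V^1_i)\rightrightarrows\prod_j\mathcal{F}(V^2_j)$ is an equalizer of topological spaces. It is a uniform sheaf if all $\mathcal{F}(V)$ are uniform spaces, complete if all $\mathcal{F}(V)$ are complete; a morphism is uniformly continuous if each $f(V)$ is; a subsheaf $\mathcal{F}'\subset\mathcal{F}$ is dense if $\mathcal{F}'(V)$ is dense in $\mathcal{F}(V)$ for all $V\in\mathcal{B}$. *)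

theory Defs
  imports "HOL-Analysis.Analysis"
begin

definition uniformity_on :: "'a set \<Rightarrow> ('a \<times> 'a) set set \<Rightarrow> bool" where
  "uniformity_on X \<Phi> \<longleftrightarrow>
     (\<forall>E\<in>\<Phi>. E \<subseteq> X \<times> X) \<and>
     X \<times> X \<in> \<Phi> \<and>
     (\<forall>E\<in>\<Phi>. \<forall>E'. E \<subseteq> E' \<and> E' \<subseteq> X \<times> X \<longrightarrow> E' \<in> \<Phi>) \<and>
     (\<forall>E\<in>\<Phi>. \<forall>E'\<in>\<Phi>. E \<inter> E' \<in> \<Phi>) \<and>
     (\<forall>E\<in>\<Phi>. Id_on X \<subseteq> E) \<and>
     (\<forall>E\<in>\<Phi>. E\<inverse> \<in> \<Phi>) \<and>
     (\<forall>E\<in>\<Phi>. \<exists>D\<in>\<Phi>. D O D \<subseteq> E)"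

definition uniform_hausdorff :: "'a set \<Rightarrow> ('a \<times> 'a) set set \<Rightarrow> bool" where
  "uniform_hausdorff X \<Phi> \<longleftrightarrow>
     (\<forall>x\<in>X. \<forall>y\<in>X. (\<forall>E\<in>\<Phi>. (x, y) \<in> E) \<longrightarrow> x = y)"

definition uniform_topology :: "'a set \<Rightarrow> ('a \<times> 'a) set set \<Rightarrow> 'a topology" where
  "uniform_topology X \<Phi> =
     topology (\<lambda>U. U \<subseteq> X \<and> (\<forall>x\<in>U. \<exists>E\<in>\<Phi>. E `` {x} \<subseteq> U))"

definition unif_continuous ::
  "'a set \<Rightarrow> ('a \<times> 'a) set set \<Rightarrow> 'b set \<Rightarrow> ('b \<times> 'b) set set \<Rightarrow> ('a \<Rightarrow> 'b) \<Rightarrow> bool" where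
  "unif_continuous X \<Phi> Y \<Psi> f \<longleftrightarrow>
     f \<in> X \<rightarrow> Y \<and> (\<forall>E\<in>\<Psi>. \<exists>D\<in>\<Phi>. \<forall>(x, y)\<in>D. (f x, f y) \<in> E)"

definition unif_complete :: "'a set \<Rightarrow> ('a \<times> 'a) set set \<Rightarrow> bool" where
  "unif_complete X \<Phi> \<longleftrightarrow>
     (\<forall>F :: 'a filter. F \<noteq> bot \<and> eventually (\<lambda>x. x \<in> X) F \<and>
        (\<forall>E\<in>\<Phi>. \<exists>P. eventually P F \<and> (\<forall>x y. P x \<and> P y \<longrightarrow> (x, y) \<in> E))
      \<longrightarrow> (\<exists>x\<in>X. \<forall>E\<in>\<Phi>. eventually (\<lambda>y. (x, y) \<in> E) F))"

definition subspace_uniformity :: "'a set \<Rightarrow> ('a \<times> 'a) set set \<Rightarrow> ('a \<times> 'a) set set" where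
  "subspace_uniformity Y \<Phi> = (\<lambda>E. E \<inter> (Y \<times> Y)) ` \<Phi>"

section \<open>The basis B, abstractly: a category with chosen disjoint unions and a
  chosen class of truncated finite hypercovers\<close>

text \<open>A truncated finite hypercover  {V2_j} \<rightarrow> {V1_i} \<rightarrow> V : the maps u1 i : V1 i \<rightarrow> V
  (i < n1) and, for j < n2, two maps pr1 j : V2 j \<rightarrow> V1 (ix1 j), pr2 j : V2 j \<rightarrow> V1 (ix2 j)
  over V.\<close>
record ('o, 'm) hcover =
  hc_base :: 'o
  hc_n1 :: nat
  hc_V1 :: "nat \<Rightarrow> 'o"
  hc_u1 :: "nat \<Rightarrow> 'm"
  hc_n2 :: nat
  hc_V2 :: "nat \<Rightarrow> 'o"
  hc_ix1 :: "nat \<Rightarrow> nat"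
  hc_ix2 :: "nat \<Rightarrow> nat"
  hc_pr1 :: "nat \<Rightarrow> 'm"
  hc_pr2 :: "nat \<Rightarrow> 'm"

record ('o, 'm) site_basis =
  sb_obj :: "'o set"
  sb_mor :: "'m set"
  sb_dom :: "'m \<Rightarrow> 'o"
  sb_cod :: "'m \<Rightarrow> 'o"
  sb_comp :: "'m \<Rightarrow> 'm \<Rightarrow> 'm"   (* sb_comp g f = g \<circ> f *)
  sb_id :: "'o \<Rightarrow> 'm"
  sb_dunion :: "'o \<Rightarrow> 'o \<Rightarrow> 'o"
  sb_inl :: "'o \<Rightarrow> 'o \<Rightarrow> 'm"
  sb_inr :: "'o \<Rightarrow> 'o \<Rightarrow> 'm"
  sb_hcovers :: "('o, 'm) hcover set"

definition is_mor :: "('o, 'm) site_basis \<Rightarrow> 'm \<Rightarrow> 'o \<Rightarrow> 'o \<Rightarrow> bool" where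
  "is_mor B f U V \<longleftrightarrow> f \<in> sb_mor B \<and> sb_dom B f = U \<and> sb_cod B f = V"

definition wf_site_basis :: "('o, 'm) site_basis \<Rightarrow> bool" where
  "wf_site_basis B \<longleftrightarrow>
     (\<forall>f\<in>sb_mor B. sb_dom B f \<in> sb_obj B \<and> sb_cod B f \<in> sb_obj B) \<and>
     (\<forall>U\<in>sb_obj B. is_mor B (sb_id B U) U U) \<and>
     (\<forall>f\<in>sb_mor B. \<forall>g\<in>sb_mor B. sb_cod B f = sb_dom B g \<longrightarrow>
         is_mor B (sb_comp B g f) (sb_dom B f) (sb_cod B g)) \<and>
     (\<forall>f\<in>sb_mor B. sb_comp B (sb_id B (sb_cod B f)) f = f \<and> sb_comp B f (sb_id B (sb_dom B f)) = f) \<and>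
     (\<forall>f\<in>sb_mor B. \<forall>g\<in>sb_mor B. \<forall>h\<in>sb_mor B. sb_cod B f = sb_dom B g \<and> sb_cod B g = sb_dom B h \<longrightarrow>
         sb_comp B h (sb_comp B g f) = sb_comp B (sb_comp B h g) f) \<and>
     (\<forall>U\<in>sb_obj B. \<forall>V\<in>sb_obj B. sb_dunion B U V \<in> sb_obj B \<and>
         is_mor B (sb_inl B U V) U (sb_dunion B U V) \<and> is_mor B (sb_inr B U V) V (sb_dunion B U V)) \<and>
     (\<forall>H\<in>sb_hcovers B. hc_base H \<in> sb_obj B \<and>
         (\<forall>i<hc_n1 H. is_mor B (hc_u1 H i) (hc_V1 H i) (hc_base H)) \<and>
         (\<forall>j<hc_n2 H. hc_ix1 H j < hc_n1 H \<and> hc_ix2 H j < hc_n1 H \<and>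
            is_mor B (hc_pr1 H j) (hc_V2 H j) (hc_V1 H (hc_ix1 H j)) \<and>
            is_mor B (hc_pr2 H j) (hc_V2 H j) (hc_V1 H (hc_ix2 H j)) \<and>
            sb_comp B (hc_u1 H (hc_ix1 H j)) (hc_pr1 H j) = sb_comp B (hc_u1 H (hc_ix2 H j)) (hc_pr2 H j)))"

text \<open>A presheaf of uniform spaces: sections F(V) = carrier, with uniformity and
  restriction maps  res f : F(cod f) \<rightarrow> F(dom f).\<close>
record ('m, 'o, 'a) upresheaf =
  ps_carr :: "'o \<Rightarrow> 'a set"
  ps_unif :: "'o \<Rightarrow> ('a \<times> 'a) set set"
  ps_res :: "'m \<Rightarrow> 'a \<Rightarrow> 'a"

definition ps_top :: "('m, 'o, 'a) upresheaf \<Rightarrow> 'o \<Rightarrow> 'a topology" where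
  "ps_top F V = uniform_topology (ps_carr F V) (ps_unif F V)"

definition uniform_sheaf :: "('o, 'm) site_basis \<Rightarrow> ('m, 'o, 'a) upresheaf \<Rightarrow> bool" where
  "uniform_sheaf B F \<longleftrightarrow>
     (\<forall>V\<in>sb_obj B. uniformity_on (ps_carr F V) (ps_unif F V) \<and>
                     uniform_hausdorff (ps_carr F V) (ps_unif F V)) \<and>
     (\<forall>f\<in>sb_mor B. continuous_map (ps_top F (sb_cod B f)) (ps_top F (sb_dom B f)) (ps_res F f)) \<and>
     (\<forall>U\<in>sb_obj B. \<forall>x\<in>ps_carr F U. ps_res F (sb_id B U) x = x) \<and>
     (\<forall>f\<in>sb_mor B. \<forall>g\<in>sb_mor B. sb_cod B f = sb_dom B g \<longrightarrow>
        (\<forall>x\<in>ps_carr F (sb_cod B g). ps_res F (sb_comp B g f) x = ps_res F f (ps_res F g x))) \<and>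
     (\<forall>U\<in>sb_obj B. \<forall>V\<in>sb_obj B.
        homeomorphic_map (ps_top F (sb_dunion B U V)) (prod_topology (ps_top F U) (ps_top F V))
          (\<lambda>x. (ps_res F (sb_inl B U V) x, ps_res F (sb_inr B U V) x))) \<and>
     (\<forall>H\<in>sb_hcovers B.
        homeomorphic_map (ps_top F (hc_base H))
          (subtopology (product_topology (\<lambda>i. ps_top F (hc_V1 H i)) {..<hc_n1 H})
             {s. \<forall>j<hc_n2 H. ps_res F (hc_pr1 H j) (s (hc_ix1 H j)) = ps_res F (hc_pr2 H j) (s (hc_ix2 H j))})
          (\<lambda>x. restrict (\<lambda>i. ps_res F (hc_u1 H i) x) {..<hc_n1 H}))"

definition complete_sheaf :: "('o, 'm) site_basis \<Rightarrow> ('m, 'o, 'a) upresheaf \<Rightarrow> bool" where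
  "complete_sheaf B F \<longleftrightarrow> (\<forall>V\<in>sb_obj B. unif_complete (ps_carr F V) (ps_unif F V))"

definition dense_subsheaf :: "('o, 'm) site_basis \<Rightarrow> ('m, 'o, 'a) upresheaf \<Rightarrow> ('m, 'o, 'a) upresheaf \<Rightarrow> bool" where
  "dense_subsheaf B F' F \<longleftrightarrow>
     uniform_sheaf B F' \<and>
     (\<forall>V\<in>sb_obj B. ps_carr F' V \<subseteq> ps_carr F V \<and>
        ps_unif F' V = subspace_uniformity (ps_carr F' V) (ps_unif F V) \<and>
        ps_top F V closure_of ps_carr F' V = ps_carr F V) \<and>
     (\<forall>f\<in>sb_mor B. \<forall>x\<in>ps_carr F' (sb_cod B f). ps_res F' f x = ps_res F f x)"

definition unif_cont_morphism ::
  "('o, 'm) site_basis \<Rightarrow> ('m, 'o, 'a) upresheaf \<Rightarrow> ('m, 'o, 'b) upresheaf \<Rightarrow> ('o \<Rightarrow> 'a \<Rightarrow> 'b) \<Rightarrow> bool" where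
  "unif_cont_morphism B F G \<phi> \<longleftrightarrow>
     (\<forall>V\<in>sb_obj B. unif_continuous (ps_carr F V) (ps_unif F V) (ps_carr G V) (ps_unif G V) (\<phi> V)) \<and>
     (\<forall>f\<in>sb_mor B. \<forall>x\<in>ps_carr F (sb_cod B f).
        \<phi> (sb_dom B f) (ps_res F f x) = ps_res G f (\<phi> (sb_cod B f) x))"

end

theory Submission
  imports Defs
begin

text \<open>
  The argument is local to each object V. Since F'(V) is dense in F(V) and G(V) is complete and
  Hausdorff, f_V extends to F(V) by sending x to the limit of f_V along the trace on F'(V) of the
  entourage neighbourhoods of x; this filter is Cauchy because f_V is uniformly continuous, and a
  three-entourage argument makes the extension uniformly continuous. Compatibility with the
  restriction maps and uniqueness both follow because two continuous maps into a Hausdorff space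
  that agree on a dense subset agree everywhere.
\<close>

lemma uniformity_on_subset: "uniformity_on X \<Phi> \<Longrightarrow> E \<in> \<Phi> \<Longrightarrow> E \<subseteq> X \<times> X"
  unfolding uniformity_on_def by (elim conjE) (erule bspec)

lemma uniformity_on_top: "uniformity_on X \<Phi> \<Longrightarrow> X \<times> X \<in> \<Phi>"
  unfolding uniformity_on_def by (elim conjE)

lemma uniformity_on_Int:
  assumes "uniformity_on X \<Phi>" "E \<in> \<Phi>" "E' \<in> \<Phi>"
  shows "E \<inter> E' \<in> \<Phi>"
proof -
  have "\<forall>E\<in>\<Phi>. \<forall>E'\<in>\<Phi>. E \<inter> E' \<in> \<Phi>"
    using assms(1) unfolding uniformity_on_def by (elim conjE)
  then show ?thesis
    using assms(2,3) by blast
qed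

lemma uniformity_on_refl:
  assumes "uniformity_on X \<Phi>" "E \<in> \<Phi>" "x \<in> X"
  shows "(x, x) \<in> E"
proof -
  have "\<forall>E\<in>\<Phi>. Id_on X \<subseteq> E"
    using assms(1) unfolding uniformity_on_def by (elim conjE)
  then show ?thesis
    using assms(2,3) by blast
qed

lemma uniformity_on_converse: "uniformity_on X \<Phi> \<Longrightarrow> E \<in> \<Phi> \<Longrightarrow> E\<inverse> \<in> \<Phi>"
  unfolding uniformity_on_def by (elim conjE) (erule bspec)

lemma uniformity_on_half: "uniformity_on X \<Phi> \<Longrightarrow> E \<in> \<Phi> \<Longrightarrow> \<exists>D\<in>\<Phi>. D O D \<subseteq> E"
  unfolding uniformity_on_def by (elim conjE) (erule bspec)

lemma uniformity_on_symmetric_half: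
  assumes "uniformity_on X \<Phi>" "E \<in> \<Phi>"
  obtains D where "D \<in> \<Phi>" "sym D" "D O D \<subseteq> E"
proof -
  obtain D where D: "D \<in> \<Phi>" "D O D \<subseteq> E"
    using uniformity_on_half[OF assms] by blast
  have "D \<inter> D\<inverse> \<in> \<Phi>"
    using uniformity_on_Int[OF assms(1) D(1) uniformity_on_converse[OF assms(1) D(1)]] .
  moreover have "sym (D \<inter> D\<inverse>)"
    by (auto intro: symI)
  moreover have "(D \<inter> D\<inverse>) O (D \<inter> D\<inverse>) \<subseteq> E"
    using D(2) by blast
  ultimately show thesis
    by (rule that)
qed

lemma uniformity_on_symmetric_third:
  assumes "uniformity_on X \<Phi>" "E \<in> \<Phi>"
  obtains D where "D \<in> \<Phi>" "sym D" "D O D O D \<subseteq> E"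
proof -
  obtain D2 where D2: "D2 \<in> \<Phi>" "sym D2" "D2 O D2 \<subseteq> E"
    using uniformity_on_symmetric_half[OF assms] .
  obtain D1 where D1: "D1 \<in> \<Phi>" "sym D1" "D1 O D1 \<subseteq> D2"
    using uniformity_on_symmetric_half[OF assms(1) D2(1)] .
  have "D1 \<inter> D2 \<in> \<Phi>"
    using uniformity_on_Int[OF assms(1) D1(1) D2(1)] .
  moreover have "sym (D1 \<inter> D2)"
    using D1(2) D2(2) by (simp add: sym_Int)
  moreover have "(D1 \<inter> D2) O (D1 \<inter> D2) O (D1 \<inter> D2) \<subseteq> E"
    using D1(3) D2(3) by blast
  ultimately show thesis
    by (rule that)
qed

subsection \<open>The uniform topology\<close>

lemma openin_uniform_topology:
  assumes "uniformity_on X \<Phi>"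
  shows "openin (uniform_topology X \<Phi>) U \<longleftrightarrow> U \<subseteq> X \<and> (\<forall>x\<in>U. \<exists>E\<in>\<Phi>. E `` {x} \<subseteq> U)"
proof -
  have "istopology (\<lambda>U. U \<subseteq> X \<and> (\<forall>x\<in>U. \<exists>E\<in>\<Phi>. E `` {x} \<subseteq> U))"
    unfolding istopology_def
  proof (rule conjI; intro allI impI)
    fix S T
    assume S: "S \<subseteq> X \<and> (\<forall>x\<in>S. \<exists>E\<in>\<Phi>. E `` {x} \<subseteq> S)"
      and T: "T \<subseteq> X \<and> (\<forall>x\<in>T. \<exists>E\<in>\<Phi>. E `` {x} \<subseteq> T)"
    show "S \<inter> T \<subseteq> X \<and> (\<forall>x\<in>S \<inter> T. \<exists>E\<in>\<Phi>. E `` {x} \<subseteq> S \<inter> T)"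
    proof (intro conjI ballI)
      fix x
      assume "x \<in> S \<inter> T"
      then obtain E1 E2 where "E1 \<in> \<Phi>" "E1 `` {x} \<subseteq> S" "E2 \<in> \<Phi>" "E2 `` {x} \<subseteq> T"
        using S T by blast
      then show "\<exists>E\<in>\<Phi>. E `` {x} \<subseteq> S \<inter> T"
        using uniformity_on_Int[OF assms] by (intro bexI[of _ "E1 \<inter> E2"]) auto
    qed (use S in blast)
  next
    fix K
    assume K: "\<forall>S\<in>K. S \<subseteq> X \<and> (\<forall>x\<in>S. \<exists>E\<in>\<Phi>. E `` {x} \<subseteq> S)"
    show "\<Union>K \<subseteq> X \<and> (\<forall>x\<in>\<Union>K. \<exists>E\<in>\<Phi>. E `` {x} \<subseteq> \<Union>K)"
    proof (intro conjI ballI)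
      fix x
      assume "x \<in> \<Union>K"
      then obtain S where "S \<in> K" "x \<in> S"
        by blast
      then obtain E where "E \<in> \<Phi>" "E `` {x} \<subseteq> S"
        using K by blast
      then show "\<exists>E\<in>\<Phi>. E `` {x} \<subseteq> \<Union>K"
        using \<open>S \<in> K\<close> by blast
    qed (use K in blast)
  qed
  then show ?thesis
    unfolding uniform_topology_def by simp
qed

lemma topspace_uniform_topology:
  assumes "uniformity_on X \<Phi>"
  shows "topspace (uniform_topology X \<Phi>) = X"
proof
  show "topspace (uniform_topology X \<Phi>) \<subseteq> X"
    using openin_uniform_topology[OF assms, of "topspace (uniform_topology X \<Phi>)"] by simp
  have "openin (uniform_topology X \<Phi>) X"
    unfolding openin_uniform_topology[OF assms]
    using uniformity_on_top[OF assms] by (intro conjI ballI bexI[of _ "X \<times> X"]) auto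
  then show "X \<subseteq> topspace (uniform_topology X \<Phi>)"
    by (rule openin_subset)
qed

lemma uniform_topology_open_nbhd:
  assumes "uniformity_on X \<Phi>" "x \<in> X" "E \<in> \<Phi>"
  obtains U where "openin (uniform_topology X \<Phi>) U" "x \<in> U" "U \<subseteq> E `` {x}"
proof -
  \<comment> \<open>The entourage interior of E``{x}; it is open because every entourage has a half.\<close>
  define U where "U = {y \<in> X. \<exists>D\<in>\<Phi>. D `` {y} \<subseteq> E `` {x}}"
  have "openin (uniform_topology X \<Phi>) U"
    unfolding openin_uniform_topology[OF assms(1)]
  proof (intro conjI ballI)
    fix y
    assume "y \<in> U"
    then obtain D where D: "D \<in> \<Phi>" "D `` {y} \<subseteq> E `` {x}"
      unfolding U_def by blast
    obtain D' where D': "D' \<in> \<Phi>" "D' O D' \<subseteq> D"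
      using uniformity_on_half[OF assms(1) D(1)] by blast
    have "D' `` {y} \<subseteq> U"
    proof
      fix z
      assume z: "z \<in> D' `` {y}"
      then have "z \<in> X"
        using uniformity_on_subset[OF assms(1) D'(1)] by blast
      moreover have "D' `` {z} \<subseteq> D `` {y}"
        using z D'(2) by blast
      ultimately show "z \<in> U"
        unfolding U_def using D'(1) D(2) by blast
    qed
    then show "\<exists>D\<in>\<Phi>. D `` {y} \<subseteq> U"
      using D'(1) by blast
  qed (auto simp: U_def)
  moreover have "x \<in> U"
    unfolding U_def using assms(2,3) by blast
  moreover have "U \<subseteq> E `` {x}"
  proof
    fix y
    assume "y \<in> U"
    then obtain D where "y \<in> X" "D \<in> \<Phi>" "D `` {y} \<subseteq> E `` {x}"
      unfolding U_def by blast
    then show "y \<in> E `` {x}"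
      using uniformity_on_refl[OF assms(1)] by blast
  qed
  ultimately show thesis
    by (rule that)
qed

lemma Hausdorff_space_uniform_topology:
  assumes "uniformity_on X \<Phi>" "uniform_hausdorff X \<Phi>"
  shows "Hausdorff_space (uniform_topology X \<Phi>)"
  unfolding Hausdorff_space_def topspace_uniform_topology[OF assms(1)]
proof (intro allI impI)
  fix x y
  assume xy: "x \<in> X \<and> y \<in> X \<and> x \<noteq> y"
  then obtain E where E: "E \<in> \<Phi>" "(x, y) \<notin> E"
    using assms(2) unfolding uniform_hausdorff_def by blast
  obtain D where D: "D \<in> \<Phi>" "sym D" "D O D \<subseteq> E"
    using uniformity_on_symmetric_half[OF assms(1) E(1)] .
  obtain U where U: "openin (uniform_topology X \<Phi>) U" "x \<in> U" "U \<subseteq> D `` {x}"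
    using uniform_topology_open_nbhd[OF assms(1) _ D(1)] xy by blast
  obtain V where V: "openin (uniform_topology X \<Phi>) V" "y \<in> V" "V \<subseteq> D `` {y}"
    using uniform_topology_open_nbhd[OF assms(1) _ D(1)] xy by blast
  have "disjnt U V"
    using U(3) V(3) D(2,3) E(2) unfolding disjnt_def by (blast dest: symD)
  then show "\<exists>U V. openin (uniform_topology X \<Phi>) U \<and> openin (uniform_topology X \<Phi>) V \<and>
      x \<in> U \<and> y \<in> V \<and> disjnt U V"
    using U(1,2) V(1,2) by meson
qed

lemma unif_continuous_imp_continuous_map:
  assumes "uniformity_on X \<Phi>" "uniformity_on Y \<Psi>" "unif_continuous X \<Phi> Y \<Psi> a"
  shows "continuous_map (uniform_topology X \<Phi>) (uniform_topology Y \<Psi>) a"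
  unfolding continuous_map_def topspace_uniform_topology[OF assms(1)] topspace_uniform_topology[OF assms(2)]
proof (intro conjI allI impI)
  show "a \<in> X \<rightarrow> Y"
    using assms(3) unfolding unif_continuous_def by blast
  fix U
  assume "openin (uniform_topology Y \<Psi>) U"
  then have U: "\<forall>y\<in>U. \<exists>E\<in>\<Psi>. E `` {y} \<subseteq> U"
    unfolding openin_uniform_topology[OF assms(2)] by blast
  have "\<exists>D\<in>\<Phi>. D `` {x} \<subseteq> {x \<in> X. a x \<in> U}" if "x \<in> X" and ax: "a x \<in> U" for x
  proof -
    obtain E where E: "E \<in> \<Psi>" "E `` {a x} \<subseteq> U"
      using U ax by blast
    obtain D where D: "D \<in> \<Phi>" "\<forall>(x, y)\<in>D. (a x, a y) \<in> E"
      using assms(3) E(1) unfolding unif_continuous_def by blast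
    have "D `` {x} \<subseteq> {x \<in> X. a x \<in> U}"
    proof
      fix y
      assume "y \<in> D `` {x}"
      then have "(x, y) \<in> D"
        by blast
      then have "y \<in> X" "(a x, a y) \<in> E"
        using uniformity_on_subset[OF assms(1) D(1)] D(2) by auto
      then show "y \<in> {x \<in> X. a x \<in> U}"
        using E(2) by blast
    qed
    then show ?thesis
      using D(1) by blast
  qed
  then show "openin (uniform_topology X \<Phi>) {x \<in> X. a x \<in> U}"
    unfolding openin_uniform_topology[OF assms(1)] by blast
qed

lemma dense_in_uniform_topologyD:
  assumes "uniformity_on X \<Phi>" "uniform_topology X \<Phi> closure_of S = X" "x \<in> X" "E \<in> \<Phi>"
  shows "\<exists>s\<in>S. (x, s) \<in> E"
proof -
  obtain U where U: "openin (uniform_topology X \<Phi>) U" "x \<in> U" "U \<subseteq> E `` {x}"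
    using uniform_topology_open_nbhd[OF assms(1,3,4)] .
  have "x \<in> uniform_topology X \<Phi> closure_of S"
    using assms(2,3) by simp
  then obtain s where "s \<in> S" "s \<in> U"
    using U(1,2) unfolding in_closure_of by blast
  then show ?thesis
    using U(3) by blast
qed

lemma unif_continuous_eq_on_dense:
  assumes "uniformity_on X \<Phi>" "uniformity_on Y \<Psi>" "uniform_hausdorff Y \<Psi>"
    and "uniform_topology X \<Phi> closure_of S = X"
    and "unif_continuous X \<Phi> Y \<Psi> a" "unif_continuous X \<Phi> Y \<Psi> b" "\<forall>s\<in>S. a s = b s"
    and "x \<in> X"
  shows "a x = b x"
proof (rule forall_in_closure_of_eq[where X = "uniform_topology X \<Phi>" and Y = "uniform_topology Y \<Psi>"])
  show "x \<in> uniform_topology X \<Phi> closure_of S"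
    using assms(4,8) by simp
  show "Hausdorff_space (uniform_topology Y \<Psi>)"
    using Hausdorff_space_uniform_topology[OF assms(2,3)] .
  show "continuous_map (uniform_topology X \<Phi>) (uniform_topology Y \<Psi>) a"
    using unif_continuous_imp_continuous_map[OF assms(1,2,5)] .
  show "continuous_map (uniform_topology X \<Phi>) (uniform_topology Y \<Psi>) b"
    using unif_continuous_imp_continuous_map[OF assms(1,2,6)] .
qed (use assms(7) in blast)

definition unif_nhds :: "('a \<times> 'a) set set \<Rightarrow> 'a \<Rightarrow> 'a filter" where
  "unif_nhds \<Phi> x = (INF E\<in>\<Phi>. principal (E `` {x}))"

definition unif_cauchy :: "('a \<times> 'a) set set \<Rightarrow> 'a filter \<Rightarrow> bool" where
  "unif_cauchy \<Phi> F \<longleftrightarrow> (\<forall>E\<in>\<Phi>. \<exists>P. eventually P F \<and> (\<forall>x y. P x \<and> P y \<longrightarrow> (x, y) \<in> E))"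

definition unif_limit :: "('a \<times> 'a) set set \<Rightarrow> 'a filter \<Rightarrow> 'a \<Rightarrow> bool" where
  "unif_limit \<Phi> F x \<longleftrightarrow> (\<forall>E\<in>\<Phi>. eventually (\<lambda>y. (x, y) \<in> E) F)"

lemma eventually_unif_nhds:
  assumes "uniformity_on X \<Phi>"
  shows "eventually P (unif_nhds \<Phi> x) \<longleftrightarrow> (\<exists>E\<in>\<Phi>. \<forall>y. (x, y) \<in> E \<longrightarrow> P y)"
proof -
  have "eventually P (unif_nhds \<Phi> x) \<longleftrightarrow> (\<exists>E\<in>\<Phi>. eventually P (principal (E `` {x})))"
    unfolding unif_nhds_def
  proof (rule eventually_INF_base)
    show "\<Phi> \<noteq> {}"
      using uniformity_on_top[OF assms] by blast
    fix E E'
    assume "E \<in> \<Phi>" "E' \<in> \<Phi>"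
    then show "\<exists>D\<in>\<Phi>. principal (D `` {x}) \<le> inf (principal (E `` {x})) (principal (E' `` {x}))"
      using uniformity_on_Int[OF assms] by (intro bexI[of _ "E \<inter> E'"]) auto
  qed
  then show ?thesis
    by (simp add: eventually_principal Ball_def Image_singleton_iff)
qed

lemma unif_completeD:
  "unif_complete X \<Phi> \<Longrightarrow> F \<noteq> bot \<Longrightarrow> eventually (\<lambda>x. x \<in> X) F \<Longrightarrow> unif_cauchy \<Phi> F \<Longrightarrow>
    \<exists>x\<in>X. unif_limit \<Phi> F x"
  unfolding unif_complete_def unif_cauchy_def unif_limit_def by blast

lemma unif_limit_unique:
  assumes "uniformity_on X \<Phi>" "uniform_hausdorff X \<Phi>" "F \<noteq> bot"
    and "x \<in> X" "y \<in> X" "unif_limit \<Phi> F x" "unif_limit \<Phi> F y"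
  shows "x = y"
proof -
  have "(x, y) \<in> E" if E: "E \<in> \<Phi>" for E
  proof -
    obtain D where D: "D \<in> \<Phi>" "sym D" "D O D \<subseteq> E"
      using uniformity_on_symmetric_half[OF assms(1) E] .
    have "eventually (\<lambda>z. (x, z) \<in> D \<and> (y, z) \<in> D) F"
      using assms(6,7) D(1) unfolding unif_limit_def by (simp add: eventually_conj)
    then obtain z where "(x, z) \<in> D" "(y, z) \<in> D"
      using eventually_happens'[OF assms(3)] by blast
    then show ?thesis
      using D(2,3) by (blast dest: symD)
  qed
  then show ?thesis
    using assms(2,4,5) unfolding uniform_hausdorff_def by blast
qed

subsection \<open>Extension from a dense subset\<close>

locale unif_dense_extension =
  fixes X :: "'a set" and \<Phi> :: "('a \<times> 'a) set set" and S :: "'a set"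
    and Y :: "'b set" and \<Psi> :: "('b \<times> 'b) set set" and \<phi> :: "'a \<Rightarrow> 'b"
  assumes uniformity_X: "uniformity_on X \<Phi>"
    and uniformity_Y: "uniformity_on Y \<Psi>"
    and hausdorff_Y: "uniform_hausdorff Y \<Psi>"
    and complete_Y: "unif_complete Y \<Psi>"
    and dense: "uniform_topology X \<Phi> closure_of S = X"
    and subset: "S \<subseteq> X"
    and unif_continuous_on_dense: "unif_continuous S (subspace_uniformity S \<Phi>) Y \<Psi> \<phi>"
begin

definition trace_filter :: "'a \<Rightarrow> 'b filter" where
  "trace_filter x = filtermap \<phi> (inf (unif_nhds \<Phi> x) (principal S))"

definition extension :: "'a \<Rightarrow> 'b" where
  "extension x = (SOME y. y \<in> Y \<and> unif_limit \<Psi> (trace_filter x) y)"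

lemma eventually_trace_filter:
  "eventually P (trace_filter x) \<longleftrightarrow> (\<exists>D\<in>\<Phi>. \<forall>s\<in>S. (x, s) \<in> D \<longrightarrow> P (\<phi> s))"
  unfolding trace_filter_def eventually_filtermap eventually_inf_principal
    eventually_unif_nhds[OF uniformity_X] by blast

lemma exists_near_in_dense:
  "x \<in> X \<Longrightarrow> D \<in> \<Phi> \<Longrightarrow> \<exists>s\<in>S. (x, s) \<in> D"
  using dense_in_uniform_topologyD[OF uniformity_X dense] .

lemma phi_mem_Y: "s \<in> S \<Longrightarrow> \<phi> s \<in> Y"
  using unif_continuous_on_dense unfolding unif_continuous_def by blast

lemma unif_continuous_on_denseE:
  assumes "E \<in> \<Psi>"
  obtains D where "D \<in> \<Phi>" "\<And>s t. s \<in> S \<Longrightarrow> t \<in> S \<Longrightarrow> (s, t) \<in> D \<Longrightarrow> (\<phi> s, \<phi> t) \<in> E"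
proof -
  obtain D' where "D' \<in> subspace_uniformity S \<Phi>" "\<forall>(s, t)\<in>D'. (\<phi> s, \<phi> t) \<in> E"
    using unif_continuous_on_dense assms unfolding unif_continuous_def by blast
  then show thesis
    using that unfolding subspace_uniformity_def by blast
qed

lemma trace_filter_neq_bot: "x \<in> X \<Longrightarrow> trace_filter x \<noteq> bot"
  using exists_near_in_dense unfolding trivial_limit_def eventually_trace_filter by blast

lemma unif_cauchy_trace_filter: "unif_cauchy \<Psi> (trace_filter x)"
  unfolding unif_cauchy_def
proof
  fix E
  assume "E \<in> \<Psi>"
  then obtain D where D: "D \<in> \<Phi>" "\<And>s t. s \<in> S \<Longrightarrow> t \<in> S \<Longrightarrow> (s, t) \<in> D \<Longrightarrow> (\<phi> s, \<phi> t) \<in> E"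
    using unif_continuous_on_denseE by blast
  obtain D' where D': "D' \<in> \<Phi>" "sym D'" "D' O D' \<subseteq> D"
    using uniformity_on_symmetric_half[OF uniformity_X D(1)] .
  have "eventually (\<lambda>z. \<exists>s\<in>S. (x, s) \<in> D' \<and> z = \<phi> s) (trace_filter x)"
    unfolding eventually_trace_filter using D'(1) by blast
  moreover have "(\<phi> s, \<phi> t) \<in> E" if "s \<in> S" "t \<in> S" "(x, s) \<in> D'" "(x, t) \<in> D'" for s t
    using that D D' by (blast dest: symD)
  ultimately show "\<exists>P. eventually P (trace_filter x) \<and> (\<forall>y z. P y \<and> P z \<longrightarrow> (y, z) \<in> E)"
    by blast
qed

lemma extension_limit:
  assumes "x \<in> X"
  shows "extension x \<in> Y" "unif_limit \<Psi> (trace_filter x) (extension x)"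
proof -
  have "eventually (\<lambda>y. y \<in> Y) (trace_filter x)"
    unfolding eventually_trace_filter using uniformity_on_top[OF uniformity_X] phi_mem_Y by blast
  then have "\<exists>y. y \<in> Y \<and> unif_limit \<Psi> (trace_filter x) y"
    using unif_completeD[OF complete_Y trace_filter_neq_bot[OF assms] _ unif_cauchy_trace_filter] by blast
  then show "extension x \<in> Y" "unif_limit \<Psi> (trace_filter x) (extension x)"
    unfolding extension_def by (metis (mono_tags, lifting) someI_ex)+
qed

lemma extension_eq:
  assumes "s \<in> S"
  shows "extension s = \<phi> s"
proof -
  have "unif_limit \<Psi> (trace_filter s) (\<phi> s)"
    unfolding unif_limit_def eventually_trace_filter
  proof
    fix E
    assume "E \<in> \<Psi>"
    then obtain D where "D \<in> \<Phi>" "\<And>s t. s \<in> S \<Longrightarrow> t \<in> S \<Longrightarrow> (s, t) \<in> D \<Longrightarrow> (\<phi> s, \<phi> t) \<in> E"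
      using unif_continuous_on_denseE by blast
    then show "\<exists>D\<in>\<Phi>. \<forall>t\<in>S. (s, t) \<in> D \<longrightarrow> (\<phi> s, \<phi> t) \<in> E"
      using assms by blast
  qed
  moreover have "s \<in> X"
    using assms subset by blast
  ultimately show ?thesis
    using unif_limit_unique[OF uniformity_Y hausdorff_Y trace_filter_neq_bot] extension_limit
      phi_mem_Y assms by blast
qed

lemma unif_continuous_extension: "unif_continuous X \<Phi> Y \<Psi> extension"
  unfolding unif_continuous_def
proof (intro conjI ballI)
  show "extension \<in> X \<rightarrow> Y"
    using extension_limit(1) by blast
  fix E
  assume "E \<in> \<Psi>"
  then obtain E' where E': "E' \<in> \<Psi>" "sym E'" "E' O E' O E' \<subseteq> E"
    using uniformity_on_symmetric_third[OF uniformity_Y] by blast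
  obtain D where D: "D \<in> \<Phi>" "\<And>s t. s \<in> S \<Longrightarrow> t \<in> S \<Longrightarrow> (s, t) \<in> D \<Longrightarrow> (\<phi> s, \<phi> t) \<in> E'"
    using unif_continuous_on_denseE[OF E'(1)] by blast
  obtain D' where D': "D' \<in> \<Phi>" "sym D'" "D' O D' O D' \<subseteq> D"
    using uniformity_on_symmetric_third[OF uniformity_X D(1)] .
  have "(extension x, extension x') \<in> E" if xx': "(x, x') \<in> D'" for x x'
  proof -
    \<comment> \<open>Go from x to a nearby s \<in> S, across to a point t \<in> S near x', and on to x'.\<close>
    have "x \<in> X" "x' \<in> X"
      using xx' uniformity_on_subset[OF uniformity_X D'(1)] by auto
    obtain Dx where Dx: "Dx \<in> \<Phi>" "\<forall>s\<in>S. (x, s) \<in> Dx \<longrightarrow> (extension x, \<phi> s) \<in> E'"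
      using extension_limit(2)[OF \<open>x \<in> X\<close>] E'(1) unfolding unif_limit_def eventually_trace_filter by blast
    obtain s where s: "s \<in> S" "(x, s) \<in> D'" "(extension x, \<phi> s) \<in> E'"
      using exists_near_in_dense[OF \<open>x \<in> X\<close> uniformity_on_Int[OF uniformity_X D'(1) Dx(1)]] Dx(2) by blast
    obtain Dx' where Dx': "Dx' \<in> \<Phi>" "\<forall>t\<in>S. (x', t) \<in> Dx' \<longrightarrow> (extension x', \<phi> t) \<in> E'"
      using extension_limit(2)[OF \<open>x' \<in> X\<close>] E'(1) unfolding unif_limit_def eventually_trace_filter by blast
    obtain t where t: "t \<in> S" "(x', t) \<in> D'" "(extension x', \<phi> t) \<in> E'"
      using exists_near_in_dense[OF \<open>x' \<in> X\<close> uniformity_on_Int[OF uniformity_X D'(1) Dx'(1)]] Dx'(2) by blast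
    have "(s, x) \<in> D'"
      using D'(2) s(2) by (rule symD)
    then have "(s, t) \<in> D"
      using xx' t(2) D'(3) by blast
    then have "(\<phi> s, \<phi> t) \<in> E'"
      using D(2) s(1) t(1) by blast
    moreover have "(\<phi> t, extension x') \<in> E'"
      using E'(2) t(3) by (rule symD)
    ultimately show ?thesis
      using s(3) E'(3) by blast
  qed
  then show "\<exists>D\<in>\<Phi>. \<forall>(x, x')\<in>D. (extension x, extension x') \<in> E"
    using D'(1) by blast
qed

lemma extension_unique:
  assumes "unif_continuous X \<Phi> Y \<Psi> h" "\<forall>s\<in>S. h s = \<phi> s" "x \<in> X"
  shows "h x = extension x"
proof (rule unif_continuous_eq_on_dense[OF uniformity_X uniformity_Y hausdorff_Y dense
      assms(1) unif_continuous_extension _ assms(3)])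
  show "\<forall>s\<in>S. h s = extension s"
    using assms(2) extension_eq by simp
qed

end

subsection \<open>Uniform sheaves\<close>

lemma wf_site_basis_dom_cod:
  assumes "wf_site_basis B" "m \<in> sb_mor B"
  shows "sb_dom B m \<in> sb_obj B" "sb_cod B m \<in> sb_obj B"
proof -
  have "\<forall>f\<in>sb_mor B. sb_dom B f \<in> sb_obj B \<and> sb_cod B f \<in> sb_obj B"
    using assms(1) unfolding wf_site_basis_def by (elim conjE)
  then show "sb_dom B m \<in> sb_obj B" "sb_cod B m \<in> sb_obj B"
    using assms(2) by blast+
qed

lemma uniform_sheaf_section:
  assumes "uniform_sheaf B F" "V \<in> sb_obj B"
  shows "uniformity_on (ps_carr F V) (ps_unif F V)" "uniform_hausdorff (ps_carr F V) (ps_unif F V)"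
proof -
  have "\<forall>V\<in>sb_obj B. uniformity_on (ps_carr F V) (ps_unif F V) \<and> uniform_hausdorff (ps_carr F V) (ps_unif F V)"
    using assms(1) unfolding uniform_sheaf_def by (elim conjE)
  then show "uniformity_on (ps_carr F V) (ps_unif F V)" "uniform_hausdorff (ps_carr F V) (ps_unif F V)"
    using assms(2) by blast+
qed

lemma uniform_sheaf_continuous_res:
  assumes "uniform_sheaf B F" "m \<in> sb_mor B"
  shows "continuous_map (ps_top F (sb_cod B m)) (ps_top F (sb_dom B m)) (ps_res F m)"
proof -
  have "\<forall>m\<in>sb_mor B. continuous_map (ps_top F (sb_cod B m)) (ps_top F (sb_dom B m)) (ps_res F m)"
    using assms(1) unfolding uniform_sheaf_def by (elim conjE)
  then show ?thesis
    using assms(2) by blast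
qed

lemma dense_subsheafD:
  assumes "dense_subsheaf B F' F"
  shows "uniform_sheaf B F'"
    and "V \<in> sb_obj B \<Longrightarrow> ps_carr F' V \<subseteq> ps_carr F V"
    and "V \<in> sb_obj B \<Longrightarrow> ps_unif F' V = subspace_uniformity (ps_carr F' V) (ps_unif F V)"
    and "V \<in> sb_obj B \<Longrightarrow> ps_top F V closure_of ps_carr F' V = ps_carr F V"
    and "m \<in> sb_mor B \<Longrightarrow> x \<in> ps_carr F' (sb_cod B m) \<Longrightarrow> ps_res F' m x = ps_res F m x"
  using assms unfolding dense_subsheaf_def by simp_all

lemma unif_cont_morphismD:
  assumes "unif_cont_morphism B F G f"
  shows "V \<in> sb_obj B \<Longrightarrow> unif_continuous (ps_carr F V) (ps_unif F V) (ps_carr G V) (ps_unif G V) (f V)"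
    and "m \<in> sb_mor B \<Longrightarrow> x \<in> ps_carr F (sb_cod B m) \<Longrightarrow>
      f (sb_dom B m) (ps_res F m x) = ps_res G m (f (sb_cod B m) x)"
  using assms unfolding unif_cont_morphism_def by simp_all

lemma dense_subsheaf_unif_dense_extension:
  assumes "uniform_sheaf B F" "uniform_sheaf B G" "dense_subsheaf B F' F" "complete_sheaf B G"
    and "unif_cont_morphism B F' G f" "V \<in> sb_obj B"
  shows "unif_dense_extension (ps_carr F V) (ps_unif F V) (ps_carr F' V) (ps_carr G V) (ps_unif G V) (f V)"
proof
  show "uniformity_on (ps_carr F V) (ps_unif F V)"
    using uniform_sheaf_section(1)[OF assms(1,6)] .
  show "uniformity_on (ps_carr G V) (ps_unif G V)"
    using uniform_sheaf_section(1)[OF assms(2,6)] .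
  show "uniform_hausdorff (ps_carr G V) (ps_unif G V)"
    using uniform_sheaf_section(2)[OF assms(2,6)] .
  show "unif_complete (ps_carr G V) (ps_unif G V)"
    using assms(4,6) unfolding complete_sheaf_def by blast
  show "uniform_topology (ps_carr F V) (ps_unif F V) closure_of ps_carr F' V = ps_carr F V"
    using dense_subsheafD(4)[OF assms(3,6)] unfolding ps_top_def .
  show "ps_carr F' V \<subseteq> ps_carr F V"
    using dense_subsheafD(2)[OF assms(3,6)] .
  show "unif_continuous (ps_carr F' V) (subspace_uniformity (ps_carr F' V) (ps_unif F V))
      (ps_carr G V) (ps_unif G V) (f V)"
    using unif_cont_morphismD(1)[OF assms(5,6)] dense_subsheafD(3)[OF assms(3,6)] by simp
qed

lemma unif_continuous_imp_continuous_map_ps_top: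
  assumes "uniform_sheaf B F" "uniform_sheaf B G" "V \<in> sb_obj B"
    and "unif_continuous (ps_carr F V) (ps_unif F V) (ps_carr G V) (ps_unif G V) g"
  shows "continuous_map (ps_top F V) (ps_top G V) g"
  unfolding ps_top_def
  using unif_continuous_imp_continuous_map[OF uniform_sheaf_section(1)[OF assms(1,3)]
      uniform_sheaf_section(1)[OF assms(2,3)] assms(4)] .

lemma unif_cont_morphism_dense_extension:
  assumes B: "wf_site_basis B" and F: "uniform_sheaf B F" and G: "uniform_sheaf B G"
    and F': "dense_subsheaf B F' F" and f: "unif_cont_morphism B F' G f"
    and g_uc: "\<And>V. V \<in> sb_obj B \<Longrightarrow>
      unif_continuous (ps_carr F V) (ps_unif F V) (ps_carr G V) (ps_unif G V) (g V)"
    and g_ext: "\<And>V x. V \<in> sb_obj B \<Longrightarrow> x \<in> ps_carr F' V \<Longrightarrow> g V x = f V x"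
  shows "unif_cont_morphism B F G g"
proof -
  have "g (sb_dom B m) (ps_res F m x) = ps_res G m (g (sb_cod B m) x)"
    if m: "m \<in> sb_mor B" and x: "x \<in> ps_carr F (sb_cod B m)" for m x
  proof -
    let ?U = "sb_dom B m" and ?W = "sb_cod B m"
    have U: "?U \<in> sb_obj B" and W: "?W \<in> sb_obj B"
      using wf_site_basis_dom_cod[OF B m] by blast+
    have F'_res: "ps_res F' m s \<in> ps_carr F' ?U" if "s \<in> ps_carr F' ?W" for s
      using continuous_map_funspace[OF uniform_sheaf_continuous_res[OF dense_subsheafD(1)[OF F'] m]] that
      unfolding ps_top_def topspace_uniform_topology[OF uniform_sheaf_section(1)[OF dense_subsheafD(1)[OF F'] U]]
        topspace_uniform_topology[OF uniform_sheaf_section(1)[OF dense_subsheafD(1)[OF F'] W]]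
      by blast
    show ?thesis
    proof (rule forall_in_closure_of_eq[where X = "ps_top F ?W" and Y = "ps_top G ?U" and S = "ps_carr F' ?W"])
      show "x \<in> ps_top F ?W closure_of ps_carr F' ?W"
        using dense_subsheafD(4)[OF F' W] x by simp
      show "Hausdorff_space (ps_top G ?U)"
        unfolding ps_top_def
        using Hausdorff_space_uniform_topology[OF uniform_sheaf_section[OF G U]] .
      show "continuous_map (ps_top F ?W) (ps_top G ?U) (\<lambda>x. g ?U (ps_res F m x))"
        using continuous_map_compose[OF uniform_sheaf_continuous_res[OF F m]
            unif_continuous_imp_continuous_map_ps_top[OF F G U g_uc[OF U]]]
        by (simp add: o_def)
      show "continuous_map (ps_top F ?W) (ps_top G ?U) (\<lambda>x. ps_res G m (g ?W x))"
        using continuous_map_compose[OF unif_continuous_imp_continuous_map_ps_top[OF F G W g_uc[OF W]]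
            uniform_sheaf_continuous_res[OF G m]]
        by (simp add: o_def)
    next
      fix s
      assume s: "s \<in> ps_carr F' ?W"
      have "g ?U (ps_res F m s) = g ?U (ps_res F' m s)"
        using dense_subsheafD(5)[OF F' m s] by simp
      also have "\<dots> = f ?U (ps_res F' m s)"
        using g_ext[OF U F'_res[OF s]] .
      also have "\<dots> = ps_res G m (f ?W s)"
        using unif_cont_morphismD(2)[OF f m s] .
      also have "\<dots> = ps_res G m (g ?W s)"
        using g_ext[OF W s] by simp
      finally show "g ?U (ps_res F m s) = ps_res G m (g ?W s)" .
    qed
  qed
  then show ?thesis
    unfolding unif_cont_morphism_def using g_uc by blast
qed

theorem lemma2p28:
  fixes B :: "('o, 'm) site_basis"
    and F F' :: "('m, 'o, 'a) upresheaf"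
    and G :: "('m, 'o, 'b) upresheaf"
    and f :: "'o \<Rightarrow> 'a \<Rightarrow> 'b"
  assumes "wf_site_basis B"
    and "uniform_sheaf B F"
    and "uniform_sheaf B G"
    and "dense_subsheaf B F' F"
    and "complete_sheaf B G"
    and "unif_cont_morphism B F' G f"
  shows "\<exists>g. unif_cont_morphism B F G g \<and>
             (\<forall>V\<in>sb_obj B. \<forall>x\<in>ps_carr F' V. g V x = f V x) \<and>
             (\<forall>h. unif_cont_morphism B F G h \<and> (\<forall>V\<in>sb_obj B. \<forall>x\<in>ps_carr F' V. h V x = f V x)
                  \<longrightarrow> (\<forall>V\<in>sb_obj B. \<forall>x\<in>ps_carr F V. h V x = g V x))"
proof -
  define g where "g V =
    unif_dense_extension.extension (ps_unif F V) (ps_carr F' V) (ps_carr G V) (ps_unif G V) (f V)" for V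
  have ext: "unif_dense_extension (ps_carr F V) (ps_unif F V) (ps_carr F' V) (ps_carr G V) (ps_unif G V) (f V)"
    if "V \<in> sb_obj B" for V
    using dense_subsheaf_unif_dense_extension[OF assms(2-6) that] .
  have g_uc: "unif_continuous (ps_carr F V) (ps_unif F V) (ps_carr G V) (ps_unif G V) (g V)"
    if "V \<in> sb_obj B" for V
    unfolding g_def using unif_dense_extension.unif_continuous_extension[OF ext[OF that]] .
  have g_ext: "g V x = f V x" if "V \<in> sb_obj B" "x \<in> ps_carr F' V" for V x
    unfolding g_def using unif_dense_extension.extension_eq[OF ext[OF that(1)] that(2)] .
  have "unif_cont_morphism B F G g"
    using unif_cont_morphism_dense_extension[OF assms(1-4,6) g_uc g_ext] .
  moreover have "h V x = g V x"
    if h: "unif_cont_morphism B F G h" "\<forall>V\<in>sb_obj B. \<forall>x\<in>ps_carr F' V. h V x = f V x"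
      and V: "V \<in> sb_obj B" and x: "x \<in> ps_carr F V" for h V x
    unfolding g_def
    using unif_dense_extension.extension_unique[OF ext[OF V] unif_cont_morphismD(1)[OF h(1) V] _ x] h(2) V
    by blast
  ultimately show ?thesis
    using g_ext by blast
qed

end
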